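(* For every integer $n\ge 0$, \[ {}_{H}w_{n+1}(x)=x\frac{d}{dx}\Big((1+x)\,{}_{H}w_{n}(x)\Big)+x\,w_{n}(x). \]
   Context: $\genfrac{\{}{\}}{0pt}{}{n}{k}$ denotes the Stirling numbers of the second kind. The geometric polynomials are $w_n(x)=\sum_{k=0}^{n}\genfrac{\{}{\}}{0pt}{}{n}{k}k!\,x^k$ (so $w_0=1$). With $H_k=\sum_{i=1}^k 1/i$, the harmonic geometric polynomials are ${}_{H}w_n(x)=\sum_{k=1}^{n}\genfrac{\{}{\}}{0pt}{}{n}{k}k!\,H_k\,x^k$ (so ${}_Hw_0=0$). *)

theory Defs
  imports "HOL-Analysis.Analysis" "HOL-Combinatorics.Stirling"
begin

definition geom_poly :: "nat \<Rightarrow> real \<Rightarrow> real" where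
  "geom_poly n x = (\<Sum>k=0..n. real (Stirling n k) * fact k * x ^ k)"

definition harm_geom_poly :: "nat \<Rightarrow> real \<Rightarrow> real" where
  "harm_geom_poly n x = (\<Sum>k=1..n. real (Stirling n k) * fact k * harm k * x ^ k)"

end

theory Submission
  imports Defs
begin

(* Compare coefficients of x^(k+1). On the right, x d/dx ((1 + x) Sum c_k x^k) contributes
   (k+1) c_(k+1) + (k+1) c_k with c_k = S(n,k) k! H_k, and x w_n contributes S(n,k) k!.
   On the left the coefficient is S(n+1,k+1) (k+1)! H_(k+1); expanding it with the Stirling
   recurrence S(n+1,k+1) = (k+1) S(n,k+1) + S(n,k) and with (k+1)! H_(k+1) = (k+1)! H_k + k!
   gives exactly the same three terms. *)

definition harm_geom_coeff :: "nat \<Rightarrow> nat \<Rightarrow> real" where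
  "harm_geom_coeff n k = real (Stirling n k) * fact k * harm k"

lemma harm_geom_poly_eq_sum_atMost:
  "harm_geom_poly n x = (\<Sum>k\<le>n. harm_geom_coeff n k * x ^ k)"
proof -
  have "{..n} = insert 0 {1..n}" by auto
  then show ?thesis
    by (simp add: harm_geom_poly_def harm_geom_coeff_def harm_def)
qed

lemma geom_poly_eq_sum_atMost:
  "geom_poly n x = (\<Sum>k\<le>n. real (Stirling n k) * fact k * x ^ k)"
  by (simp add: geom_poly_def atLeast0AtMost)

lemma fact_Suc_mult_harm_Suc:
  "fact (Suc k) * harm (Suc k) = fact (Suc k) * harm k + (fact k :: 'a :: real_normed_field)"
  by (simp add: harm_Suc distrib_left del: of_nat_Suc)

lemma harm_geom_coeff_Suc_Suc:
  "harm_geom_coeff (Suc n) (Suc k) = real (Suc k) * harm_geom_coeff n (Suc k)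
     + real (Suc k) * harm_geom_coeff n k + real (Stirling n k) * fact k"
proof -
  have "harm_geom_coeff (Suc n) (Suc k)
      = real (Suc k) * harm_geom_coeff n (Suc k) + real (Stirling n k) * (fact (Suc k) * harm (Suc k))"
    by (simp add: harm_geom_coeff_def algebra_simps)
  also have "\<dots> = real (Suc k) * harm_geom_coeff n (Suc k)
      + real (Stirling n k) * (fact (Suc k) * harm k + fact k)"
    by (simp only: fact_Suc_mult_harm_Suc)
  finally show ?thesis
    by (simp add: harm_geom_coeff_def algebra_simps)
qed

lemma x_deriv_one_plus_mult_poly:
  fixes c :: "nat \<Rightarrow> 'a :: real_normed_field"
  shows "x * deriv (\<lambda>t. (1 + t) * (\<Sum>k\<le>n. c k * t ^ k)) x
    = (\<Sum>k\<le>n. of_nat k * c k * x ^ k) + (\<Sum>k\<le>n. of_nat (Suc k) * c k * x ^ Suc k)"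
proof -
  have "x * (\<Sum>k\<le>n. c k * (of_nat k * x ^ (k - 1))) = (\<Sum>k\<le>n. of_nat k * c k * x ^ k)"
    unfolding sum_distrib_left by (rule sum.cong) (auto simp: power_eq_if)
  moreover have "((\<lambda>t. (1 + t) * (\<Sum>k\<le>n. c k * t ^ k)) has_field_derivative
      (\<Sum>k\<le>n. c k * x ^ k) + (1 + x) * (\<Sum>k\<le>n. c k * (of_nat k * x ^ (k - 1)))) (at x)"
    by (auto intro!: derivative_eq_intros simp: algebra_simps)
  ultimately show ?thesis
    by (simp add: DERIV_imp_deriv distrib_left distrib_right sum_distrib_left sum.distrib algebra_simps)
qed

lemma sum_atMost_of_nat_mult_power_shift:
  fixes c :: "nat \<Rightarrow> 'a :: comm_semiring_1"
  assumes "c (Suc n) = 0"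
  shows "(\<Sum>k\<le>n. of_nat k * c k * x ^ k) = (\<Sum>k\<le>n. of_nat (Suc k) * c (Suc k) * x ^ Suc k)"
proof -
  have "(\<Sum>k\<le>n. of_nat k * c k * x ^ k) = (\<Sum>k\<le>Suc n. of_nat k * c k * x ^ k)"
    using assms by simp
  then show ?thesis
    by (simp only: sum.atMost_Suc_shift) simp
qed

theorem proposition2:
  fixes n :: nat and x :: real
  shows "harm_geom_poly (Suc n) x
         = x * deriv (\<lambda>t. (1 + t) * harm_geom_poly n t) x + x * geom_poly n x"
proof -
  let ?c = "harm_geom_coeff n"
  have "x * deriv (\<lambda>t. (1 + t) * harm_geom_poly n t) x
      = (\<Sum>k\<le>n. real (Suc k) * ?c (Suc k) * x ^ Suc k) + (\<Sum>k\<le>n. real (Suc k) * ?c k * x ^ Suc k)"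
    unfolding harm_geom_poly_eq_sum_atMost x_deriv_one_plus_mult_poly
    by (simp add: sum_atMost_of_nat_mult_power_shift harm_geom_coeff_def)
  moreover have "x * geom_poly n x = (\<Sum>k\<le>n. real (Stirling n k) * fact k * x ^ Suc k)"
    by (simp add: geom_poly_eq_sum_atMost sum_distrib_left algebra_simps)
  moreover have "harm_geom_poly (Suc n) x = (\<Sum>k\<le>n. harm_geom_coeff (Suc n) (Suc k) * x ^ Suc k)"
    by (simp only: harm_geom_poly_eq_sum_atMost sum.atMost_Suc_shift) (simp add: harm_geom_coeff_def)
  ultimately show ?thesis
    by (simp add: harm_geom_coeff_Suc_Suc distrib_right sum.distrib)
qed

end
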